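(* Let $N=[n(i,j)]$, $\mathfrak h$, $\alpha_i$, $\mathcal A$, $F$, $v_1,\dots,v_r$ be as in the context. Suppose $\delta_1,\dots,\delta_r,\delta_{-1},\dots,\delta_{-r}\in\mathrm{Im}\,F$ are such that, with $\mathbf X_i=v_i\delta_i$ and $\mathbf X_{-i}=v_i^{-1}\delta_{-i}$, one has $[\mathbf X_i,\mathbf X_{-i}]=F(H_i)$ for all $i$ and $[\mathbf X_i,\mathbf X_{-j}]=0$ for $i\neq j$. Then also, for all $i\neq j$, $$\mathrm{ad}(\mathbf X_i)^{1-n(i,j)}(\mathbf X_j)=0\quad\text{and}\quad \mathrm{ad}(\mathbf X_{-i})^{1-n(i,j)}(\mathbf X_{-j})=0$$ in $\mathrm{Der}(\mathcal A)$.
   Context: A generalised Cartan matrix is $N=[n(i,j)]_{1\le i,j\le r}$ with $n(i,j)\in\mathbb Z$, $n(i,i)=2$, $n(i,j)\le 0$ for $i\neq j$, and $n(i,j)=0\iff n(j,i)=0$. Let $s$ be the corank of $N$, $\mathfrak h$ the complex vector space with basis $H_1,\dots,H_{r+s}$, and $\alpha_1,\dots,\alpha_r\in\mathfrak h^*$ linearly independent with $\alpha_j(H_i)=n(i,j)$ for $1\le i,j\le r$. $\mathcal A$ is a complex commutative algebra, $\mathrm{Der}(\mathcal A)$ its Lie algebra of derivations (commutator bracket); for $a\in\mathcal A$, $D\in\mathrm{Der}(\mathcal A)$, $aD$ is $b\mapsto aD(b)$. $F:\mathfrak h\to\mathrm{Der}(\mathcal A)$ is a Lie algebra homomorphism ($\mathfrak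 h$ abelian) and $v_1,\dots,v_r\in\mathcal A$ are invertible with $F(H)(v_i)=\alpha_i(H)v_i$ for all $H\in\mathfrak h$. *)

theory Defs
  imports Complex_Main
begin

definition gen_cartan :: "nat \<Rightarrow> (nat \<Rightarrow> nat \<Rightarrow> int) \<Rightarrow> bool" where
  "gen_cartan r N \<longleftrightarrow>
     (\<forall>i\<in>{1..r}. N i i = 2) \<and>
     (\<forall>i\<in>{1..r}. \<forall>j\<in>{1..r}. i \<noteq> j \<longrightarrow> N i j \<le> 0) \<and>
     (\<forall>i\<in>{1..r}. \<forall>j\<in>{1..r}. N i j = 0 \<longleftrightarrow> N j i = 0)"

definition cols_indep :: "nat \<Rightarrow> (nat \<Rightarrow> nat \<Rightarrow> int) \<Rightarrow> nat set \<Rightarrow> bool" where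
  "cols_indep r N S \<longleftrightarrow>
     (\<forall>l::nat \<Rightarrow> complex. (\<forall>i\<in>{1..r}. (\<Sum>j\<in>S. l j * of_int (N i j)) = 0)
        \<longrightarrow> (\<forall>j\<in>S. l j = 0))"

definition mat_rank :: "nat \<Rightarrow> (nat \<Rightarrow> nat \<Rightarrow> int) \<Rightarrow> nat" where
  "mat_rank r N = Max {card S | S. S \<subseteq> {1..r} \<and> cols_indep r N S}"

definition corank :: "nat \<Rightarrow> (nat \<Rightarrow> nat \<Rightarrow> int) \<Rightarrow> nat" where
  "corank r N = r - mat_rank r N"

section \<open>The Cartan subalgebra h = C^m with basis H_1..H_m (coordinates)\<close>

definition hspace :: "nat \<Rightarrow> (nat \<Rightarrow> complex) set" where
  "hspace m = {c. \<forall>k. k \<notin> {1..m} \<longrightarrow> c k = 0}"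

definition Hb :: "nat \<Rightarrow> nat \<Rightarrow> complex" where
  "Hb k = (\<lambda>l. if l = k then 1 else 0)"

text \<open>A complex commutative algebra: a commutative ring 'a together with a unital ring
  homomorphism phi from the complex numbers (scalar multiplication z.a = phi z * a).\<close>
definition complex_alg_hom :: "(complex \<Rightarrow> 'a::comm_ring_1) \<Rightarrow> bool" where
  "complex_alg_hom phi \<longleftrightarrow> phi 1 = 1 \<and>
     (\<forall>x y. phi (x + y) = phi x + phi y) \<and> (\<forall>x y. phi (x * y) = phi x * phi y)"

definition is_derivation :: "(complex \<Rightarrow> 'a::comm_ring_1) \<Rightarrow> ('a \<Rightarrow> 'a) \<Rightarrow> bool" where
  "is_derivation phi D \<longleftrightarrow>
     (\<forall>a b. D (a + b) = D a + D b) \<and>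
     (\<forall>z a. D (phi z * a) = phi z * D a) \<and>
     (\<forall>a b. D (a * b) = a * D b + D a * b)"

definition lie_br :: "('a::comm_ring_1 \<Rightarrow> 'a) \<Rightarrow> ('a \<Rightarrow> 'a) \<Rightarrow> ('a \<Rightarrow> 'a)" where
  "lie_br D E = (\<lambda>b. D (E b) - E (D b))"

definition lmult :: "'a::comm_ring_1 \<Rightarrow> ('a \<Rightarrow> 'a) \<Rightarrow> ('a \<Rightarrow> 'a)" where
  "lmult a D = (\<lambda>b. a * D b)"

end

theory Submission
  imports Defs
begin

text \<open>
  Write X_i = v_i F(c_i) and X_{-i} = v_i^{-1} F(d_i). Because the F(c) commute, the bracket
  of u F(c) and w F(e), for weight vectors u and w, is u w F(e') with e' an explicit
  combination of c and e. Iterating: if u and w have weights A and B on c, and u has weight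
  a on e, then ad(u F(c))^k (w F(e)) = u^k w F(x_k e + y_k c) with
  x_k = prod_{l<k} (l A + B) and y_k = -k a prod_{l<k-1} (l A + B).

  Evaluating the relations [X_i, X_{-j}] = delta_ij F(H_i) on the weight vectors v_q gives
  scalar identities between the numbers alpha_q(c_k), alpha_q(d_k). They force
  alpha_j(c_i) = -p alpha_i(c_i) and alpha_j(d_i) = -q alpha_i(d_i) with p, q in {0, 1} and
  n(i,j) = -(p + q), so that for k = 1 - n(i,j) a factor l A + B of x_k and y_k vanishes.
  The negative generators are treated in the same way, v_i^{-1} having weight -alpha_i.
\<close>

locale abelian_action_by_derivations =
  fixes phi :: "complex \<Rightarrow> 'a::comm_ring_1"
    and F :: "(nat \<Rightarrow> complex) \<Rightarrow> 'a \<Rightarrow> 'a"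
    and H :: "(nat \<Rightarrow> complex) set"
  assumes phi_hom: "complex_alg_hom phi"
    and F_derivation: "c \<in> H \<Longrightarrow> is_derivation phi (F c)"
    and F_linear: "c \<in> H \<Longrightarrow> d \<in> H \<Longrightarrow> F (\<lambda>k. c k + z * d k) = (\<lambda>b. F c b + phi z * F d b)"
    and F_commute: "c \<in> H \<Longrightarrow> d \<in> H \<Longrightarrow> lie_br (F c) (F d) = (\<lambda>_. 0)"
    and H_zero: "(\<lambda>_. 0) \<in> H"
    and H_lincomb: "c \<in> H \<Longrightarrow> d \<in> H \<Longrightarrow> (\<lambda>k. x * c k + y * d k) \<in> H"
begin

lemma phi_add: "phi (x + y) = phi x + phi y"
  and phi_mult: "phi (x * y) = phi x * phi y"
  and phi_1: "phi 1 = 1"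
  using phi_hom by (auto simp: complex_alg_hom_def)

lemma phi_0: "phi 0 = 0"
  using phi_add[of 0 0] by simp

lemma phi_minus: "phi (- x) = - phi x"
  using phi_add[of x "- x"] by (simp add: phi_0 eq_neg_iff_add_eq_0 add.commute)

lemma phi_diff: "phi (x - y) = phi x - phi y"
  using phi_add[of x "- y"] by (simp add: phi_minus)

lemma phi_cancel:
  assumes "(1::'a) \<noteq> 0" "u * u' = 1" "phi x * u = phi y * u"
  shows "x = y"
proof (rule ccontr)
  assume "x \<noteq> y"
  have "phi (x - y) * u = 0"
    using assms(3) by (simp add: phi_diff algebra_simps)
  then have "phi (x - y) * phi (inverse (x - y)) * (u * u') = 0"
    by (metis mult.commute mult.left_commute mult_zero_left)
  then show False
    using \<open>x \<noteq> y\<close> assms(1,2) by (simp add: phi_mult[symmetric] phi_1)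
qed

lemma F_mult: "c \<in> H \<Longrightarrow> F c (a * b) = a * F c b + F c a * b"
  using F_derivation by (simp add: is_derivation_def)

lemma F_swap: "c \<in> H \<Longrightarrow> d \<in> H \<Longrightarrow> F c (F d b) = F d (F c b)"
  using fun_cong[OF F_commute, of c d b] by (simp add: lie_br_def)

lemma F_at_zero: "F (\<lambda>_. 0) b = 0"
  using fun_cong[OF F_linear[OF H_zero H_zero, of 1], of b] by (simp add: phi_1)

lemma F_lincomb:
  assumes "c \<in> H" "d \<in> H"
  shows "F (\<lambda>k. x * c k + y * d k) b = phi x * F c b + phi y * F d b"
proof -
  have scale: "F (\<lambda>k. x * c k) b = phi x * F c b"
    using fun_cong[OF F_linear[OF H_zero assms(1), of x], of b] by (simp add: F_at_zero)
  have "(\<lambda>k. x * c k) \<in> H"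
    using H_lincomb[OF assms(1) assms(1), of x 0] by simp
  from fun_cong[OF F_linear[OF this assms(2), of y], of b] show ?thesis
    by (simp add: scale)
qed

lemma weight_lincomb:
  assumes "c \<in> H" "e \<in> H" "F c u = phi A * u" "F e u = phi a * u"
  shows "F (\<lambda>t. x * e t + y * c t) u = phi (x * a + y * A) * u"
  using assms by (simp add: F_lincomb phi_add phi_mult algebra_simps)

lemma weight_mult:
  assumes "c \<in> H" "F c u = phi A * u" "F c w = phi B * w"
  shows "F c (u * w) = phi (A + B) * (u * w)"
  using assms by (simp add: F_mult phi_add algebra_simps)

lemma weight_power_mult:
  assumes "c \<in> H" "F c u = phi A * u" "F c w = phi B * w"
  shows "F c (u ^ k * w) = phi (of_nat k * A + B) * (u ^ k * w)"
proof (induction k)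
  case 0
  then show ?case using assms(3) by simp
next
  case (Suc k)
  have "F c (u * (u ^ k * w)) = phi (A + (of_nat k * A + B)) * (u * (u ^ k * w))"
    by (rule weight_mult[OF assms(1,2) Suc.IH])
  then show ?case by (simp add: algebra_simps)
qed

lemma weight_inverse:
  assumes "c \<in> H" "u * u' = 1" "F c u = phi A * u"
  shows "F c u' = phi (- A) * u'"
proof -
  have "F c (u * u') = 0"
    using F_mult[OF assms(1), of 1 1] assms(2) by simp
  then have "u' * (u * F c u' + phi A * u * u') = 0"
    using F_mult[OF assms(1), of u u'] assms(3) by simp
  also have "u' * (u * F c u' + phi A * u * u') = (u * u') * F c u' + (u * u') * (phi A * u')"
    by (simp add: algebra_simps)
  finally show ?thesis
    using assms(2) by (simp add: phi_minus eq_neg_iff_add_eq_0)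
qed

lemma lie_br_lmult:
  assumes "c \<in> H" "e \<in> H" "F c w = phi \<beta> * w" "F e u = phi \<gamma> * u"
  shows "lie_br (lmult u (F c)) (lmult w (F e)) = lmult (u * w) (F (\<lambda>t. \<beta> * e t + (- \<gamma>) * c t))"
proof
  fix b
  have lincomb: "F (\<lambda>t. \<beta> * e t + (- \<gamma>) * c t) b = phi \<beta> * F e b - phi \<gamma> * F c b"
    using F_lincomb[OF assms(2,1), of \<beta> "- \<gamma>"] by (simp add: phi_minus)
  show "lie_br (lmult u (F c)) (lmult w (F e)) b = lmult (u * w) (F (\<lambda>t. \<beta> * e t + (- \<gamma>) * c t)) b"
    unfolding lie_br_def lmult_def lincomb
    using assms F_mult[OF assms(1), of w "F e b"] F_mult[OF assms(2), of u "F c b"] F_swap[OF assms(1,2)]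
    by (simp add: algebra_simps)
qed

lemma ad_power_lmult:
  assumes "c \<in> H" "e \<in> H" "F c u = phi A * u" "F c w = phi B * w" "F e u = phi a * u"
  shows "(lie_br (lmult u (F c)) ^^ k) (lmult w (F e)) =
    lmult (u ^ k * w) (F (\<lambda>t. (\<Prod>l<k. of_nat l * A + B) * e t
                              + (- of_nat k * a * (\<Prod>l<k - 1. of_nat l * A + B)) * c t))"
proof (induction k)
  case 0
  then show ?case by simp
next
  case (Suc k)
  define p where "p n = (\<Prod>l<n. of_nat l * A + B)" for n
  define x where "x = p k"
  define y where "y = - of_nat k * a * p (k - 1)"
  have e_k: "(\<lambda>t. x * e t + y * c t) \<in> H"
    using H_lincomb[OF assms(2,1)] .
  have "lie_br (lmult u (F c)) (lmult (u ^ k * w) (F (\<lambda>t. x * e t + y * c t)))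
      = lmult (u * (u ^ k * w)) (F (\<lambda>t. (of_nat k * A + B) * (x * e t + y * c t) + (- (x * a + y * A)) * c t))"
    by (rule lie_br_lmult[OF assms(1) e_k weight_power_mult[OF assms(1,3,4)]
          weight_lincomb[OF assms(1,2,3,5)]])
  also have "(\<lambda>t. (of_nat k * A + B) * (x * e t + y * c t) + (- (x * a + y * A)) * c t)
      = (\<lambda>t. ((of_nat k * A + B) * x) * e t + ((of_nat k * A + B) * y - (x * a + y * A)) * c t)"
    by (simp add: algebra_simps)
  also have "(of_nat k * A + B) * x = p (Suc k)"
    by (simp add: x_def p_def mult.commute)
  also have "(of_nat k * A + B) * y - (x * a + y * A) = - of_nat (Suc k) * a * p (Suc k - 1)"
    by (cases k) (simp_all add: x_def y_def p_def algebra_simps)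
  finally show ?case
    using Suc.IH by (simp add: x_def y_def p_def mult.assoc)
qed

lemma ad_power_vanishes:
  assumes "c \<in> H" "e \<in> H" "F c u = phi A * u" "F c w = phi B * w" "F e u = phi a * u"
    and "B = - of_nat l * A" "l + 2 \<le> k \<or> (a = 0 \<and> l + 1 \<le> k)"
  shows "(lie_br (lmult u (F c)) ^^ k) (lmult w (F e)) = (\<lambda>_. 0)"
proof -
  have root: "of_nat l * A + B = 0"
    using assms(6) by simp
  have x: "(\<Prod>i<k. of_nat i * A + B) = 0"
    using assms(7) root by (auto intro!: bexI[of _ l])
  have y: "- of_nat k * a * (\<Prod>i<k - 1. of_nat i * A + B) = 0"
    using assms(7) root by (auto intro!: bexI[of _ l])
  show ?thesis
    unfolding ad_power_lmult[OF assms(1-5)] x y by (simp add: F_at_zero lmult_def)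
qed

end

lemma zero_or_negated_pair:
  fixes x y p q :: "'k::field"
  assumes "p \<noteq> 0" "q \<noteq> 0" "y * (x + p) = 0" "x * (y + q) = 0"
  shows "(x = 0 \<and> y = 0) \<or> (x = - p \<and> y = - q)"
proof (cases "x = 0")
  case True
  then show ?thesis using assms(1,3) by simp
next
  case False
  then have "y = - q" using assms(4) by (simp add: eq_neg_iff_add_eq_0)
  then have "y \<noteq> 0" using assms(2) by simp
  then have "x = - p" using assms(3) by (simp add: eq_neg_iff_add_eq_0)
  then show ?thesis using \<open>y = - q\<close> by simp
qed

text \<open>
  In the application A = alpha_i(c_i), D = alpha_i(d_i), A' = alpha_j(c_j), D' = alpha_j(d_j),
  B = alpha_j(c_i), B' = alpha_j(d_i), a = alpha_i(c_j), b = alpha_i(d_j) and n = n(i,j); the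
  hypotheses are instances of \<open>bracket_weight_identity\<close> below.
\<close>

lemma cartan_entry_cases:
  fixes A D A' D' B B' a b n :: "'k::field_char_0"
  assumes "- A * D - D * A = 2" "- A' * D' - D' * A' = 2"
    and "- B * b - b * A = 0" "- B * D' - b * B = 0"
    and "- a * D - B' * a = 0" "- a * B' - B' * A' = 0"
    and "- A * B' - D * B = n"
  obtains p q :: nat
  where "p \<le> 1" "q \<le> 1" "n = - of_nat (p + q)" "B = - of_nat p * A" "B' = - of_nat q * D"
    "a = 0 \<or> q = 1" "b = 0 \<or> p = 1"
proof -
  have normalised: "x * y = -1" if "- x * y - y * x = 2" for x y :: 'k
  proof -
    have "2 * (x * y) = - (- x * y - y * x)" by (simp add: algebra_simps)
    also have "\<dots> = 2 * (-1)" using that by simp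
    finally show ?thesis by simp
  qed
  have AD: "A * D = -1" and "A' * D' = -1"
    using normalised[OF assms(1)] normalised[OF assms(2)] .
  then have nonzero: "A \<noteq> 0" "D \<noteq> 0" "A' \<noteq> 0" "D' \<noteq> 0"
    by auto
  have "b * (B + A) = 0" "B * (b + D') = 0" "a * (B' + D) = 0" "B' * (a + A') = 0"
    using assms(3-6) by (simp_all add: algebra_simps neg_eq_iff_add_eq_0 eq_neg_iff_add_eq_0)
  then have "(B = 0 \<and> b = 0) \<or> (B = - A \<and> b = - D')"
    and "(B' = 0 \<and> a = 0) \<or> (B' = - D \<and> a = - A')"
    using zero_or_negated_pair nonzero by blast+
  then show thesis
  proof (elim disjE conjE)
    assume "B = 0" "b = 0" "B' = 0" "a = 0"
    then show thesis using assms(7) by (intro that[of 0 0]) simp_all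
  next
    assume "B = 0" "b = 0" "B' = - D" "a = - A'"
    then show thesis using AD assms(7)[symmetric] by (intro that[of 0 1]) (simp_all add: mult.commute)
  next
    assume "B = - A" "b = - D'" "B' = 0" "a = 0"
    then show thesis using AD assms(7)[symmetric] by (intro that[of 1 0]) (simp_all add: mult.commute)
  next
    assume "B = - A" "b = - D'" "B' = - D" "a = - A'"
    then show thesis using AD assms(7)[symmetric] by (intro that[of 1 1]) (simp_all add: mult.commute)
  qed
qed

text \<open>\<open>c i\<close> and \<open>d i\<close> are elements of \<open>H\<close> with delta_i = F (c i) and delta_{-i} = F (d i).\<close>

locale chevalley_realisation = abelian_action_by_derivations phi F H
  for phi :: "complex \<Rightarrow> 'a::comm_ring_1" and F and H +
  fixes r :: nat and N :: "nat \<Rightarrow> nat \<Rightarrow> int" and \<alpha> :: "nat \<Rightarrow> (nat \<Rightarrow> complex) \<Rightarrow> complex"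
    and v vinv :: "nat \<Rightarrow> 'a" and c d :: "nat \<Rightarrow> nat \<Rightarrow> complex"
  assumes nontrivial: "(1::'a) \<noteq> 0"
    and N_diag: "i \<in> {1..r} \<Longrightarrow> N i i = 2"
    and Hb_in_H: "i \<in> {1..r} \<Longrightarrow> Hb i \<in> H"
    and alpha_Hb: "i \<in> {1..r} \<Longrightarrow> j \<in> {1..r} \<Longrightarrow> \<alpha> j (Hb i) = of_int (N i j)"
    and c_in_H: "i \<in> {1..r} \<Longrightarrow> c i \<in> H"
    and d_in_H: "i \<in> {1..r} \<Longrightarrow> d i \<in> H"
    and v_vinv: "i \<in> {1..r} \<Longrightarrow> v i * vinv i = 1"
    and v_weight: "i \<in> {1..r} \<Longrightarrow> e \<in> H \<Longrightarrow> F e (v i) = phi (\<alpha> i e) * v i"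
    and bracket_diag: "i \<in> {1..r} \<Longrightarrow>
      lie_br (lmult (v i) (F (c i))) (lmult (vinv i) (F (d i))) = F (Hb i)"
    and bracket_offdiag: "i \<in> {1..r} \<Longrightarrow> j \<in> {1..r} \<Longrightarrow> i \<noteq> j \<Longrightarrow>
      lie_br (lmult (v i) (F (c i))) (lmult (vinv j) (F (d j))) = (\<lambda>_. 0)"
begin

lemma vinv_weight: "i \<in> {1..r} \<Longrightarrow> e \<in> H \<Longrightarrow> F e (vinv i) = phi (- \<alpha> i e) * vinv i"
  by (rule weight_inverse[OF _ v_vinv v_weight])

lemma bracket_weight_identity:
  assumes i: "i \<in> {1..r}" and j: "j \<in> {1..r}" and q: "q \<in> {1..r}"
  shows "- \<alpha> j (c i) * \<alpha> q (d j) - \<alpha> i (d j) * \<alpha> q (c i) = (if i = j then of_int (N i q) else 0)"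
    (is "?E = _")
proof -
  have "lie_br (lmult (v i) (F (c i))) (lmult (vinv j) (F (d j)))
      = lmult (v i * vinv j) (F (\<lambda>t. (- \<alpha> j (c i)) * d j t + (- \<alpha> i (d j)) * c i t))"
    by (rule lie_br_lmult[OF c_in_H[OF i] d_in_H[OF j] vinv_weight[OF j c_in_H[OF i]]
          v_weight[OF i d_in_H[OF j]]])
  moreover have "F (\<lambda>t. (- \<alpha> j (c i)) * d j t + (- \<alpha> i (d j)) * c i t) (v q) = phi ?E * v q"
    using weight_lincomb[OF c_in_H[OF i] d_in_H[OF j] v_weight[OF q c_in_H[OF i]]
        v_weight[OF q d_in_H[OF j]], of "- \<alpha> j (c i)" "- \<alpha> i (d j)"] by simp
  ultimately have "lie_br (lmult (v i) (F (c i))) (lmult (vinv j) (F (d j))) (v q)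
      = v i * vinv j * (phi ?E * v q)"
    by (simp add: lmult_def)
  then have eval: "lie_br (lmult (v i) (F (c i))) (lmult (vinv j) (F (d j))) (v q)
      = phi ?E * (v i * vinv j * v q)"
    by (simp add: algebra_simps)
  show ?thesis
  proof (cases "i = j")
    case True
    then have "phi ?E * v q = phi (of_int (N i q)) * v q"
      using eval bracket_diag[OF i] v_weight[OF q Hb_in_H[OF i]] alpha_Hb[OF i q] v_vinv[OF i]
      by simp
    then show ?thesis
      using phi_cancel[OF nontrivial v_vinv[OF q]] True by simp
  next
    case False
    have "(v i * vinv j * v q) * (vinv i * v j * vinv q) = (v i * vinv i) * (v j * vinv j) * (v q * vinv q)"
      by (simp add: algebra_simps)
    also have "\<dots> = 1"
      using v_vinv[OF i] v_vinv[OF j] v_vinv[OF q] by simp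
    finally have unit: "(v i * vinv j * v q) * (vinv i * v j * vinv q) = 1" .
    have "phi ?E * (v i * vinv j * v q) = phi 0 * (v i * vinv j * v q)"
      using eval bracket_offdiag[OF i j False] by (simp add: phi_0)
    then have "?E = 0"
      by (rule phi_cancel[OF nontrivial unit])
    with False show ?thesis by simp
  qed
qed

lemma serre_relations:
  assumes i: "i \<in> {1..r}" and j: "j \<in> {1..r}" and ij: "i \<noteq> j"
  shows "(lie_br (lmult (v i) (F (c i))) ^^ nat (1 - N i j)) (lmult (v j) (F (c j))) = (\<lambda>_. 0)"
    and "(lie_br (lmult (vinv i) (F (d i))) ^^ nat (1 - N i j)) (lmult (vinv j) (F (d j))) = (\<lambda>_. 0)"
proof -
  note identity = bracket_weight_identity
  have norm_i: "- \<alpha> i (c i) * \<alpha> i (d i) - \<alpha> i (d i) * \<alpha> i (c i) = 2"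
    using identity[OF i i i] N_diag[OF i] by simp
  have norm_j: "- \<alpha> j (c j) * \<alpha> j (d j) - \<alpha> j (d j) * \<alpha> j (c j) = 2"
    using identity[OF j j j] N_diag[OF j] by simp
  have entries: "- \<alpha> j (c i) * \<alpha> i (d j) - \<alpha> i (d j) * \<alpha> i (c i) = 0"
    "- \<alpha> j (c i) * \<alpha> j (d j) - \<alpha> i (d j) * \<alpha> j (c i) = 0"
    "- \<alpha> i (c j) * \<alpha> i (d i) - \<alpha> j (d i) * \<alpha> i (c j) = 0"
    "- \<alpha> i (c j) * \<alpha> j (d i) - \<alpha> j (d i) * \<alpha> j (c j) = 0"
    "- \<alpha> i (c i) * \<alpha> j (d i) - \<alpha> i (d i) * \<alpha> j (c i) = of_int (N i j)"
    using identity[OF i j i] identity[OF i j j] identity[OF j i i] identity[OF j i j]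
      identity[OF i i j] ij by simp_all
  obtain p q :: nat where pq: "p \<le> 1" "q \<le> 1" "of_int (N i j) = (- of_nat (p + q) :: complex)"
      "\<alpha> j (c i) = - of_nat p * \<alpha> i (c i)" "\<alpha> j (d i) = - of_nat q * \<alpha> i (d i)"
      "\<alpha> i (c j) = 0 \<or> q = 1" "\<alpha> i (d j) = 0 \<or> p = 1"
    by (rule cartan_entry_cases[OF norm_i norm_j entries])
  have "N i j = - int (p + q)"
    using pq(3) by (metis of_int_eq_iff of_int_minus of_int_of_nat_eq)
  then have exponent: "nat (1 - N i j) = 1 + p + q"
    by simp
  show "(lie_br (lmult (v i) (F (c i))) ^^ nat (1 - N i j)) (lmult (v j) (F (c j))) = (\<lambda>_. 0)"
    unfolding exponent
    by (rule ad_power_vanishes[OF c_in_H[OF i] c_in_H[OF j] v_weight[OF i c_in_H[OF i]]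
          v_weight[OF j c_in_H[OF i]] v_weight[OF i c_in_H[OF j]], of p]) (use pq in auto)
  show "(lie_br (lmult (vinv i) (F (d i))) ^^ nat (1 - N i j)) (lmult (vinv j) (F (d j))) = (\<lambda>_. 0)"
    unfolding exponent
    by (rule ad_power_vanishes[OF d_in_H[OF i] d_in_H[OF j] vinv_weight[OF i d_in_H[OF i]]
          vinv_weight[OF j d_in_H[OF i]] vinv_weight[OF i d_in_H[OF j]], of q]) (use pq in auto)
qed

end

theorem theorem3p12:
  fixes r :: nat and N :: "nat \<Rightarrow> nat \<Rightarrow> int"
    and \<alpha> :: "nat \<Rightarrow> (nat \<Rightarrow> complex) \<Rightarrow> complex"
    and phi :: "complex \<Rightarrow> 'a::comm_ring_1"
    and F :: "(nat \<Rightarrow> complex) \<Rightarrow> 'a \<Rightarrow> 'a"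
    and v vinv :: "nat \<Rightarrow> 'a"
    and \<delta>p \<delta>m :: "nat \<Rightarrow> 'a \<Rightarrow> 'a"
  defines "s \<equiv> corank r N"
  defines "\<h> \<equiv> hspace (r + s)"
  defines "Xp \<equiv> (\<lambda>i. lmult (v i) (\<delta>p i))"
  defines "Xm \<equiv> (\<lambda>i. lmult (vinv i) (\<delta>m i))"
  assumes cartan: "gen_cartan r N"
    and alpha_lin: "\<forall>j\<in>{1..r}. \<forall>c\<in>\<h>. \<forall>d\<in>\<h>. \<forall>z. \<alpha> j (\<lambda>k. c k + z * d k) = \<alpha> j c + z * \<alpha> j d"
    and alpha_N: "\<forall>i\<in>{1..r}. \<forall>j\<in>{1..r}. \<alpha> j (Hb i) = of_int (N i j)"
    and alpha_indep: "\<forall>l::nat \<Rightarrow> complex. (\<forall>c\<in>\<h>. (\<Sum>j=1..r. l j * \<alpha> j c) = 0)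
                        \<longrightarrow> (\<forall>j\<in>{1..r}. l j = 0)"
    and phi_hom: "complex_alg_hom phi"
    and F_der: "\<forall>c\<in>\<h>. is_derivation phi (F c)"
    and F_lin: "\<forall>c\<in>\<h>. \<forall>d\<in>\<h>. \<forall>z. F (\<lambda>k. c k + z * d k) = (\<lambda>b. F c b + phi z * F d b)"
    and F_br: "\<forall>c\<in>\<h>. \<forall>d\<in>\<h>. lie_br (F c) (F d) = (\<lambda>_. 0)"
    and v_inv: "\<forall>i\<in>{1..r}. v i * vinv i = 1"
    and F_v: "\<forall>i\<in>{1..r}. \<forall>c\<in>\<h>. F c (v i) = phi (\<alpha> i c) * v i"
    and \<delta>p_im: "\<forall>i\<in>{1..r}. \<exists>c\<in>\<h>. \<delta>p i = F c"
    and \<delta>m_im: "\<forall>i\<in>{1..r}. \<exists>c\<in>\<h>. \<delta>m i = F c"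
    and rel_H: "\<forall>i\<in>{1..r}. lie_br (Xp i) (Xm i) = F (Hb i)"
    and rel_0: "\<forall>i\<in>{1..r}. \<forall>j\<in>{1..r}. i \<noteq> j \<longrightarrow> lie_br (Xp i) (Xm j) = (\<lambda>_. 0)"
  shows "\<forall>i\<in>{1..r}. \<forall>j\<in>{1..r}. i \<noteq> j \<longrightarrow>
           ((lie_br (Xp i)) ^^ nat (1 - N i j)) (Xp j) = (\<lambda>_. 0) \<and>
           ((lie_br (Xm i)) ^^ nat (1 - N i j)) (Xm j) = (\<lambda>_. 0)"
proof (cases "(1::'a) = 0")
  case True
  then have "f = (\<lambda>_. 0)" for f :: "'a \<Rightarrow> 'a"
    by (metis mult_1_left mult_zero_left)
  then show ?thesis by blast
next
  case False
  obtain cp where cp: "\<forall>i\<in>{1..r}. cp i \<in> \<h> \<and> \<delta>p i = F (cp i)"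
    using \<delta>p_im by metis
  obtain cm where cm: "\<forall>i\<in>{1..r}. cm i \<in> \<h> \<and> \<delta>m i = F (cm i)"
    using \<delta>m_im by metis
  interpret chevalley_realisation phi F \<h> r N \<alpha> v vinv cp cm
    by unfold_locales (use phi_hom F_der F_lin F_br False cartan alpha_N v_inv F_v cp cm rel_H rel_0 in
      \<open>auto simp: \<h>_def hspace_def Hb_def gen_cartan_def Xp_def Xm_def\<close>)
  show ?thesis
    using serre_relations cp cm by (simp add: Xp_def Xm_def)
qed

end
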